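(* Let $f:E_A^{\mathbb N}\to\mathbb R$ be summable, strongly regular and Hölder-type with $P(f)=0$. There is a constant $K_1>0$, depending only on $h$, such that for every $n\ge1$, every $\omega\in E_A^n$ and every $\rho\in E_A^{\mathbb N}$ with $\omega\rho$ admissible, $$(1-K_1e^{-n\alpha})h(\omega\rho)m([\omega])\le\mu([\omega])\le(1+K_1e^{-n\alpha})h(\omega\rho)m([\omega]).$$
   Context: $E$ countable, $A:E\times E\to\{0,1\}$, $E_A^{\mathbb N}$ admissible one-sided sequences, $E_A^n$ admissible words of length $n$; the subshift is finitely irreducible. $S_nf=\sum_{j<n}f\circ\sigma^j$, $[\omega]$ cylinders, $|\rho\wedge\rho'|$ common-prefix length. Fix $\alpha>0$; Hölder-type: $V_\alpha(f)=\sup_{n\ge1}\sup\{|f(\rho)-f(\rho')|e^{\alpha(n-1)}:|\rho\wedge\rho'|\ge n\}<\infty$. Summable: $\sum_e\exp(\sup_{[e]}f)<\infty$. $P(g)=\lim_n\frac1n\log\sum_{\omega\in E_A^n}\exp(\sup_{[\omega]}S_ng)$; strongly regular: $P(xf)=0$ for some $x>0$ and $0<P(xf)<\infty$ for some $x>0$. $\mathcal L_1g(\rho)=\sum_{e:A_{e\rho_1}=1}e^{f(e\rho)}g(e\rho)$; $m$ the Borel probability with $\mathcal L_1^*m=m$; $h$ the positive Hölder continuous function with $\mathcal L_1h=h$, $\int h\,dm=1$; $\mu$ the measure $\mu(B)=\int_Bh\,dm$. *)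

theory Defs
  imports "HOL-Probability.Probability"
begin

text \<open>Symbolic dynamics over a countable alphabet (the type 'e), incidence matrix
  A :: 'e => 'e => bool (A a b means A_{ab} = 1).  One-sided sequences are nat => 'e.\<close>

definition admissible :: "('e \<Rightarrow> 'e \<Rightarrow> bool) \<Rightarrow> (nat \<Rightarrow> 'e) \<Rightarrow> bool" where
  "admissible A x \<longleftrightarrow> (\<forall>i. A (x i) (x (Suc i)))"

definition XA :: "('e \<Rightarrow> 'e \<Rightarrow> bool) \<Rightarrow> (nat \<Rightarrow> 'e) set" where
  "XA A = {x. admissible A x}"

definition adm_word :: "('e \<Rightarrow> 'e \<Rightarrow> bool) \<Rightarrow> 'e list \<Rightarrow> bool" where
  "adm_word A w \<longleftrightarrow> (\<forall>i. Suc i < length w \<longrightarrow> A (w ! i) (w ! Suc i))"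

definition words :: "('e \<Rightarrow> 'e \<Rightarrow> bool) \<Rightarrow> nat \<Rightarrow> 'e list set" where
  "words A n = {w. length w = n \<and> adm_word A w}"

definition cyl :: "('e \<Rightarrow> 'e \<Rightarrow> bool) \<Rightarrow> 'e list \<Rightarrow> (nat \<Rightarrow> 'e) set" where
  "cyl A w = {x \<in> XA A. \<forall>i<length w. x i = w ! i}"

definition wcat :: "'e list \<Rightarrow> (nat \<Rightarrow> 'e) \<Rightarrow> (nat \<Rightarrow> 'e)" where
  "wcat w x = (\<lambda>i. if i < length w then w ! i else x (i - length w))"

definition shift :: "(nat \<Rightarrow> 'e) \<Rightarrow> (nat \<Rightarrow> 'e)" where
  "shift x = (\<lambda>i. x (Suc i))"

definition birkhoff :: "nat \<Rightarrow> ((nat \<Rightarrow> 'e) \<Rightarrow> real) \<Rightarrow> (nat \<Rightarrow> 'e) \<Rightarrow> real" where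
  "birkhoff n g x = (\<Sum>j<n. g ((shift ^^ j) x))"

definition expsup :: "('e \<Rightarrow> 'e \<Rightarrow> bool) \<Rightarrow> ((nat \<Rightarrow> 'e) \<Rightarrow> real) \<Rightarrow> 'e list \<Rightarrow> ennreal" where
  "expsup A g w = (SUP x\<in>cyl A w. ennreal (exp (g x)))"

definition Zpart :: "('e \<Rightarrow> 'e \<Rightarrow> bool) \<Rightarrow> ((nat \<Rightarrow> 'e) \<Rightarrow> real) \<Rightarrow> nat \<Rightarrow> ennreal" where
  "Zpart A g n = (\<integral>\<^sup>+ w. expsup A (birkhoff n g) w \<partial>count_space (words A n))"

definition log_enn :: "ennreal \<Rightarrow> ereal" where
  "log_enn z = (if z = \<infinity> then \<infinity> else if z = 0 then -\<infinity> else ereal (ln (enn2real z)))"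

definition pressure :: "('e \<Rightarrow> 'e \<Rightarrow> bool) \<Rightarrow> ((nat \<Rightarrow> 'e) \<Rightarrow> real) \<Rightarrow> ereal" where
  "pressure A g = lim (\<lambda>n. log_enn (Zpart A g n) / ereal (real n))"

definition holder_type :: "('e \<Rightarrow> 'e \<Rightarrow> bool) \<Rightarrow> real \<Rightarrow> ((nat \<Rightarrow> 'e) \<Rightarrow> real) \<Rightarrow> bool" where
  "holder_type A \<alpha> f \<longleftrightarrow> (\<exists>C. \<forall>n\<ge>1. \<forall>x\<in>XA A. \<forall>y\<in>XA A.
      (\<forall>i<n. x i = y i) \<longrightarrow> \<bar>f x - f y\<bar> * exp (\<alpha> * (real n - 1)) \<le> C)"

definition summable_pot :: "('e \<Rightarrow> 'e \<Rightarrow> bool) \<Rightarrow> ((nat \<Rightarrow> 'e) \<Rightarrow> real) \<Rightarrow> bool" where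
  "summable_pot A f \<longleftrightarrow> (\<integral>\<^sup>+ e. expsup A f [e] \<partial>count_space UNIV) < \<infinity>"

definition strongly_regular :: "('e \<Rightarrow> 'e \<Rightarrow> bool) \<Rightarrow> ((nat \<Rightarrow> 'e) \<Rightarrow> real) \<Rightarrow> bool" where
  "strongly_regular A f \<longleftrightarrow>
     (\<exists>t>0. pressure A (\<lambda>x. t * f x) = 0) \<and>
     (\<exists>t>0. 0 < pressure A (\<lambda>x. t * f x) \<and> pressure A (\<lambda>x. t * f x) < \<infinity>)"

definition finitely_irreducible :: "('e \<Rightarrow> 'e \<Rightarrow> bool) \<Rightarrow> bool" where
  "finitely_irreducible A \<longleftrightarrow> (\<exists>\<Lambda>. finite \<Lambda> \<and>
      (\<forall>a b. \<exists>l\<in>\<Lambda>. adm_word A (a # l @ [b])))"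

definition transfer :: "('e \<Rightarrow> 'e \<Rightarrow> bool) \<Rightarrow> ((nat \<Rightarrow> 'e) \<Rightarrow> real) \<Rightarrow> ((nat \<Rightarrow> 'e) \<Rightarrow> real)
     \<Rightarrow> (nat \<Rightarrow> 'e) \<Rightarrow> real" where
  "transfer A f g x = (\<Sum>\<^sub>\<infinity>e\<in>{e. A e (x 0)}. exp (f (wcat [e] x)) * g (wcat [e] x))"

text \<open>Continuity on E_A^N for the product topology (E discrete)\<close>
definition cont_XA :: "('e \<Rightarrow> 'e \<Rightarrow> bool) \<Rightarrow> ((nat \<Rightarrow> 'e) \<Rightarrow> real) \<Rightarrow> bool" where
  "cont_XA A g \<longleftrightarrow> (\<forall>x\<in>XA A. \<forall>\<epsilon>>0. \<exists>n. \<forall>y\<in>XA A. (\<forall>i<n. y i = x i) \<longrightarrow> \<bar>g y - g x\<bar> < \<epsilon>)"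

text \<open>Borel sigma-algebra of E_A^N (generated by cylinders, E countable discrete)\<close>
definition shift_borel :: "('e \<Rightarrow> 'e \<Rightarrow> bool) \<Rightarrow> (nat \<Rightarrow> 'e) measure" where
  "shift_borel A = sigma (XA A) (range (cyl A))"

end

theory Submission
  imports Defs
begin

text \<open>
  The eigenfunction \<open>h\<close> is Hoelder-type, so on an \<open>n\<close>-cylinder it deviates from its value at
  any point by at most \<open>C e^{-n\<alpha>}\<close>; dividing by a positive lower bound for \<open>h\<close> turns this
  into the relative error \<open>K\<^sub>1 e^{-n\<alpha>}\<close>, and integrating over the cylinder gives both bounds.
  The lower bound comes from the eigen-equation: all terms of \<open>\<L>\<^sup>k h = h\<close> are nonnegative, so
  \<open>h x \<ge> exp (S\<^sub>k f (u x)) h (u x)\<close> for every admissible word \<open>u\<close> of length \<open>k\<close>. Fix a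
  cylinder on which \<open>h\<close> stays above half its value at a point; by finite irreducibility every
  \<open>x\<close> is reached from it through one of finitely many connecting words, along which the
  Birkhoff sums of \<open>f\<close> are bounded below.
\<close>

lemma adm_word_Nil [simp]: "adm_word A []"
  unfolding adm_word_def by auto

lemma adm_word_Cons:
  "adm_word A (a # u) \<longleftrightarrow> adm_word A u \<and> (u \<noteq> [] \<longrightarrow> A a (hd u))"
  unfolding adm_word_def by (cases u) (auto simp: nth_Cons split: nat.splits)

lemma adm_word_append_overlap:
  "u \<noteq> [] \<Longrightarrow> adm_word A (u @ v) \<longleftrightarrow> adm_word A u \<and> adm_word A (last u # v)"
  by (induction u rule: list_nonempty_induct) (auto simp: adm_word_Cons)

lemma adm_word_map_upt: "admissible A x \<Longrightarrow> adm_word A (map x [0..<n])"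
  unfolding adm_word_def admissible_def by simp

lemma wcat_Nil [simp]: "wcat [] x = x"
  unfolding wcat_def by simp

lemma wcat_nth_less: "i < length u \<Longrightarrow> wcat u x i = u ! i"
  unfolding wcat_def by simp

lemma wcat_0: "wcat u x 0 = hd (u @ [x 0])"
  unfolding wcat_def by (cases u) simp_all

lemma wcat_Cons_0 [simp]: "wcat (e # u) x 0 = e"
  unfolding wcat_def by simp

lemma wcat_Cons_Suc [simp]: "wcat (e # u) x (Suc i) = wcat u x i"
  unfolding wcat_def by simp

lemma wcat_Cons: "wcat (e # u) x = wcat [e] (wcat u x)"
  unfolding wcat_def by (auto simp: nth_Cons split: nat.splits)

lemma shift_wcat_Cons [simp]: "shift (wcat (e # u) x) = wcat u x"
  unfolding shift_def by simp

lemma admissible_iff_shift: "admissible A y \<longleftrightarrow> A (y 0) (y 1) \<and> admissible A (shift y)"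
  unfolding admissible_def shift_def by (metis One_nat_def not0_implies_Suc)

lemma admissible_wcat_Cons:
  "admissible A (wcat (e # u) x) \<longleftrightarrow> A e (wcat u x 0) \<and> admissible A (wcat u x)"
  by (subst admissible_iff_shift) simp

lemma admissible_wcat:
  "admissible A (wcat u x) \<longleftrightarrow> adm_word A (u @ [x 0]) \<and> admissible A x"
  by (induction u) (auto simp: admissible_wcat_Cons adm_word_Cons wcat_0)

lemma birkhoff_0 [simp]: "birkhoff 0 g x = 0"
  unfolding birkhoff_def by simp

lemma birkhoff_Suc: "birkhoff (Suc n) g x = g x + birkhoff n g (shift x)"
  unfolding birkhoff_def sum.lessThan_Suc_shift funpow_Suc_right by simp

lemma holder_type_oscillation:
  assumes "holder_type A \<alpha> g"
  obtains C where "C > 0"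
    and "\<And>n x y. n \<ge> 1 \<Longrightarrow> x \<in> XA A \<Longrightarrow> y \<in> XA A \<Longrightarrow> \<forall>i<n. x i = y i \<Longrightarrow>
           \<bar>g x - g y\<bar> \<le> C * exp (- real n * \<alpha>)"
proof -
  obtain V where V: "\<And>n x y. n \<ge> 1 \<Longrightarrow> x \<in> XA A \<Longrightarrow> y \<in> XA A \<Longrightarrow> \<forall>i<n. x i = y i \<Longrightarrow>
      \<bar>g x - g y\<bar> * exp (\<alpha> * (real n - 1)) \<le> V"
    using assms unfolding holder_type_def by blast
  show ?thesis
  proof (rule that)
    show "\<bar>V\<bar> * exp \<alpha> + 1 > 0"
      by (simp add: add_nonneg_pos)
    fix n x y
    assume "n \<ge> 1" "x \<in> XA A" "y \<in> XA A" "\<forall>i<n. x i = y i"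
    then have bound: "\<bar>g x - g y\<bar> * exp (\<alpha> * (real n - 1)) \<le> \<bar>V\<bar>"
      using V by fastforce
    have inverse: "exp (\<alpha> * (real n - 1)) * (exp \<alpha> * exp (- real n * \<alpha>)) = 1"
      by (simp add: algebra_simps flip: exp_add)
    have "\<bar>g x - g y\<bar> = \<bar>g x - g y\<bar> * exp (\<alpha> * (real n - 1)) * (exp \<alpha> * exp (- real n * \<alpha>))"
      by (simp only: mult.assoc inverse mult_1_right)
    also have "\<dots> \<le> \<bar>V\<bar> * (exp \<alpha> * exp (- real n * \<alpha>))"
      using bound by (rule mult_right_mono) simp
    also have "\<dots> \<le> (\<bar>V\<bar> * exp \<alpha> + 1) * exp (- real n * \<alpha>)"
      by (simp add: algebra_simps)
    finally show "\<bar>g x - g y\<bar> \<le> (\<bar>V\<bar> * exp \<alpha> + 1) * exp (- real n * \<alpha>)" .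
  qed
qed

lemma holder_type_bdd_below_cyl_single:
  assumes "holder_type A \<alpha> g"
  shows "bdd_below (g ` cyl A [e])"
proof (cases "cyl A [e] = {}")
  case False
  then obtain p where p: "p \<in> cyl A [e]" by blast
  obtain C where "\<And>x y. x \<in> XA A \<Longrightarrow> y \<in> XA A \<Longrightarrow> \<forall>i<1. x i = y i \<Longrightarrow>
      \<bar>g x - g y\<bar> \<le> C * exp (- real 1 * \<alpha>)"
    using holder_type_oscillation[OF assms] by (metis order.refl)
  then have "g p - C * exp (- \<alpha>) \<le> g x" if "x \<in> cyl A [e]" for x
    using p that by (fastforce simp: cyl_def abs_le_iff)
  then show ?thesis
    by (intro bdd_belowI2)
qed simp

lemma birkhoff_wcat_bdd_below:
  assumes "holder_type A \<alpha> f"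
  shows "bdd_below {birkhoff (length u) f (wcat u x) | x. wcat u x \<in> XA A}"
proof (induction u)
  case Nil
  then show ?case by simp
next
  case (Cons e u)
  obtain b where b: "\<And>y. y \<in> cyl A [e] \<Longrightarrow> b \<le> f y"
    using holder_type_bdd_below_cyl_single[OF assms, of e] unfolding bdd_below_def by blast
  obtain b' where b': "\<And>x. wcat u x \<in> XA A \<Longrightarrow> b' \<le> birkhoff (length u) f (wcat u x)"
    using Cons.IH by (auto simp: bdd_below_def)
  have "b + b' \<le> birkhoff (length (e # u)) f (wcat (e # u) x)" if "wcat (e # u) x \<in> XA A" for x
    using that b[of "wcat (e # u) x"] b'[of x]
    by (simp add: birkhoff_Suc cyl_def XA_def admissible_wcat_Cons)
  then show ?case
    by (intro bdd_belowI[of _ "b + b'"]) auto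
qed

lemma holder_type_ge_half_near:
  assumes alpha_pos: "\<alpha> > 0" and g_holder: "holder_type A \<alpha> g"
    and z: "z \<in> XA A" and gz: "g z > 0"
  obtains N where "N \<ge> 1" and "\<And>y. y \<in> XA A \<Longrightarrow> \<forall>i<N. y i = z i \<Longrightarrow> g z / 2 \<le> g y"
proof -
  obtain C where "C > 0"
    and C: "\<And>n x y. n \<ge> 1 \<Longrightarrow> x \<in> XA A \<Longrightarrow> y \<in> XA A \<Longrightarrow> \<forall>i<n. x i = y i \<Longrightarrow>
      \<bar>g x - g y\<bar> \<le> C * exp (- real n * \<alpha>)"
    using holder_type_oscillation[OF g_holder] by metis
  have "exp (- real n * \<alpha>) = exp (- \<alpha>) ^ n" for n
    by (simp flip: exp_of_nat_mult)
  then have "(\<lambda>n. C * exp (- real n * \<alpha>)) \<longlonglongrightarrow> 0"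
    using alpha_pos by (simp add: tendsto_mult_right_zero LIMSEQ_power_zero)
  then have "\<forall>\<^sub>F n in sequentially. C * exp (- real n * \<alpha>) < g z / 2"
    by (rule order_tendstoD(2)) (simp add: gz)
  then obtain N0 where N0: "\<And>n. n \<ge> N0 \<Longrightarrow> C * exp (- real n * \<alpha>) < g z / 2"
    unfolding eventually_sequentially by blast
  show ?thesis
  proof (rule that)
    show "Suc N0 \<ge> 1"
      by simp
    fix y assume "y \<in> XA A" "\<forall>i<Suc N0. y i = z i"
    then show "g z / 2 \<le> g y"
      using C[of "Suc N0" y z] N0[of "Suc N0"] z by (simp add: abs_le_iff)
  qed
qed

lemma eigenfunction_term_le:
  assumes h_pos: "\<And>x. x \<in> XA A \<Longrightarrow> h x > 0"
    and h_eigen: "\<And>x. x \<in> XA A \<Longrightarrow> transfer A f h x = h x"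
    and x: "x \<in> XA A" and e: "A e (x 0)"
  shows "exp (f (wcat [e] x)) * h (wcat [e] x) \<le> h x"
proof -
  let ?g = "\<lambda>e. exp (f (wcat [e] x)) * h (wcat [e] x)"
  let ?S = "{e. A e (x 0)}"
  have hx: "h x = infsum ?g ?S"
    using h_eigen[OF x] unfolding transfer_def by simp
  \<comment> \<open>a non-summable family has infinite sum 0, which \<open>h x > 0\<close> rules out\<close>
  have "?g summable_on ?S"
    using hx h_pos[OF x] infsum_not_exists by fastforce
  moreover have "?g e' \<ge> 0" if "e' \<in> ?S" for e'
  proof -
    have "wcat [e'] x \<in> XA A"
      using that x by (simp add: XA_def admissible_wcat adm_word_Cons)
    then show ?thesis
      using h_pos by (simp add: less_imp_le)
  qed
  ultimately have "infsum ?g {e} \<le> infsum ?g ?S"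
    using e by (intro infsum_mono_neutral) auto
  then show ?thesis
    using hx by simp
qed

lemma eigenfunction_birkhoff_le:
  assumes h_pos: "\<And>x. x \<in> XA A \<Longrightarrow> h x > 0"
    and h_eigen: "\<And>x. x \<in> XA A \<Longrightarrow> transfer A f h x = h x"
  shows "wcat u x \<in> XA A \<Longrightarrow> exp (birkhoff (length u) f (wcat u x)) * h (wcat u x) \<le> h x"
proof (induction u)
  case Nil
  then show ?case by simp
next
  case (Cons e u)
  define y where "y = wcat u x"
  have y: "y \<in> XA A" and e: "A e (y 0)"
    using Cons.prems by (simp_all add: y_def XA_def admissible_wcat_Cons)
  have "exp (birkhoff (length (e # u)) f (wcat (e # u) x)) * h (wcat (e # u) x)
      = exp (birkhoff (length u) f y) * (exp (f (wcat [e] y)) * h (wcat [e] y))"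
    by (simp add: birkhoff_Suc exp_add y_def wcat_Cons[of e u])
  also have "\<dots> \<le> exp (birkhoff (length u) f y) * h y"
    using eigenfunction_term_le[OF h_pos h_eigen y e] by simp
  also have "\<dots> \<le> h x"
    using Cons.IH y by (simp add: y_def)
  finally show ?case .
qed

lemma eigenfunction_bounded_below:
  assumes alpha_pos: "\<alpha> > 0"
    and irred: "finitely_irreducible A"
    and f_holder: "holder_type A \<alpha> f"
    and h_pos: "\<And>x. x \<in> XA A \<Longrightarrow> h x > 0"
    and h_holder: "holder_type A \<alpha> h"
    and h_eigen: "\<And>x. x \<in> XA A \<Longrightarrow> transfer A f h x = h x"
  shows "\<exists>c>0. \<forall>x\<in>XA A. c \<le> h x"
proof (cases "XA A = {}")
  case False
  then obtain z where z: "z \<in> XA A" by blast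
  obtain N where N: "N \<ge> 1" and near_z: "\<And>y. y \<in> XA A \<Longrightarrow> \<forall>i<N. y i = z i \<Longrightarrow> h z / 2 \<le> h y"
    using holder_type_ge_half_near[OF alpha_pos h_holder z h_pos[OF z]] by metis
  define w where "w = map z [0..<N]"
  have w: "w \<noteq> []" "adm_word A w"
    using N z by (auto simp: w_def adm_word_map_upt XA_def)
  obtain \<Lambda> where \<Lambda>: "finite \<Lambda>" "\<And>a b. \<exists>l\<in>\<Lambda>. adm_word A (a # l @ [b])"
    using irred unfolding finitely_irreducible_def by blast
  \<comment> \<open>only finitely many connecting words \<open>w @ l\<close> are needed, so their Birkhoff sums share a lower bound\<close>
  have "bdd_below (\<Union>l\<in>\<Lambda>. {birkhoff (length (w @ l)) f (wcat (w @ l) x) | x. wcat (w @ l) x \<in> XA A})"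
    using \<Lambda>(1) birkhoff_wcat_bdd_below[OF f_holder] by (simp del: length_append)
  then obtain b where b: "\<And>l x. l \<in> \<Lambda> \<Longrightarrow> wcat (w @ l) x \<in> XA A \<Longrightarrow>
      b \<le> birkhoff (length (w @ l)) f (wcat (w @ l) x)"
    unfolding bdd_below_def by blast
  have "exp b * (h z / 2) \<le> h x" if x: "x \<in> XA A" for x
  proof -
    obtain l where l: "l \<in> \<Lambda>" "adm_word A (last w # l @ [x 0])"
      using \<Lambda>(2) by blast
    define y where "y = wcat (w @ l) x"
    have "adm_word A ((w @ l) @ [x 0])"
      using w l(2) by (simp add: adm_word_append_overlap)
    then have y: "y \<in> XA A"
      using x by (simp add: y_def XA_def admissible_wcat)
    have "\<forall>i<N. y i = z i"
      by (simp add: y_def wcat_nth_less w_def nth_append)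
    then have "exp b * (h z / 2) \<le> exp (birkhoff (length (w @ l)) f y) * h y"
      using b[OF l(1)] y near_z h_pos[OF z] by (intro mult_mono) (auto simp: y_def)
    also have "\<dots> \<le> h x"
      unfolding y_def by (rule eigenfunction_birkhoff_le[OF h_pos h_eigen y[unfolded y_def]])
    finally show ?thesis .
  qed
  then show ?thesis
    using h_pos[OF z] by (intro exI[of _ "exp b * (h z / 2)"]) auto
qed (auto intro: exI[of _ 1])

lemma holder_type_relative_oscillation_cyl:
  assumes g_holder: "holder_type A \<alpha> g"
    and c: "c > 0" "\<And>x. x \<in> XA A \<Longrightarrow> c \<le> g x"
  obtains K where "K > 0"
    and "\<And>n \<omega> \<rho> x. n \<ge> 1 \<Longrightarrow> length \<omega> = n \<Longrightarrow> admissible A (wcat \<omega> \<rho>) \<Longrightarrow> x \<in> cyl A \<omega> \<Longrightarrow>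
           \<bar>g x - g (wcat \<omega> \<rho>)\<bar> \<le> K * exp (- real n * \<alpha>) * g (wcat \<omega> \<rho>)"
proof -
  obtain C where C: "C > 0" "\<And>n x y. n \<ge> 1 \<Longrightarrow> x \<in> XA A \<Longrightarrow> y \<in> XA A \<Longrightarrow> \<forall>i<n. x i = y i \<Longrightarrow>
      \<bar>g x - g y\<bar> \<le> C * exp (- real n * \<alpha>)"
    using holder_type_oscillation[OF g_holder] by metis
  show ?thesis
  proof (rule that)
    show "C / c > 0"
      using C(1) c(1) by simp
    fix n \<omega> \<rho> x
    assume n: "n \<ge> 1" and \<omega>: "length \<omega> = n" and adm: "admissible A (wcat \<omega> \<rho>)"
      and x: "x \<in> cyl A \<omega>"
    have p: "wcat \<omega> \<rho> \<in> XA A"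
      using adm by (simp add: XA_def)
    have "\<forall>i<n. x i = wcat \<omega> \<rho> i"
      using x \<omega> by (simp add: cyl_def wcat_nth_less)
    then have "\<bar>g x - g (wcat \<omega> \<rho>)\<bar> \<le> C * exp (- real n * \<alpha>)"
      using C(2)[OF n _ p] x by (simp add: cyl_def)
    also have "\<dots> = C / c * exp (- real n * \<alpha>) * c"
      using c(1) by simp
    also have "\<dots> \<le> C / c * exp (- real n * \<alpha>) * g (wcat \<omega> \<rho>)"
      using C(1) c(1) c(2)[OF p] by (intro mult_left_mono) simp_all
    finally show "\<bar>g x - g (wcat \<omega> \<rho>)\<bar> \<le> C / c * exp (- real n * \<alpha>) * g (wcat \<omega> \<rho>)" .
  qed
qed

lemma (in finite_measure) set_integral_near_const:
  fixes g :: "'a \<Rightarrow> real"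
  assumes B: "B \<in> sets M" and g: "set_integrable M B g"
    and near: "\<And>x. x \<in> B \<Longrightarrow> \<bar>g x - a\<bar> \<le> r"
  shows "\<bar>(LINT x:B|M. g x) - a * measure M B\<bar> \<le> r * measure M B"
proof -
  have const_integrable: "set_integrable M B (\<lambda>_. c)" for c :: real
    unfolding set_integrable_def using B by (intro integrable_mult_indicator) simp_all
  have const_integral: "(LINT x:B|M. c) = c * measure M B" for c :: real
    using B by (simp add: set_integral_const)
  have "a - r \<le> g x" "g x \<le> a + r" if "x \<in> B" for x
    using near[OF that] by (simp_all add: abs_le_iff)
  then have "(LINT x:B|M. a - r) \<le> (LINT x:B|M. g x)" "(LINT x:B|M. g x) \<le> (LINT x:B|M. a + r)"
    by (auto intro!: set_integral_mono const_integrable g)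
  then show ?thesis
    unfolding const_integral by (simp add: abs_le_iff algebra_simps)
qed

lemma cyl_in_shift_borel: "cyl A w \<in> sets (shift_borel A)"
  unfolding shift_borel_def by (subst sets_measure_of) (auto simp: cyl_def)

theorem mainTheorem14:
  fixes A :: "'e::countable \<Rightarrow> 'e \<Rightarrow> bool"
    and f h :: "(nat \<Rightarrow> 'e) \<Rightarrow> real"
    and \<alpha> :: real
    and m :: "(nat \<Rightarrow> 'e) measure"
  assumes alpha_pos: "\<alpha> > 0"
    and irred: "finitely_irreducible A"
    and f_summable: "summable_pot A f"
    and f_sreg: "strongly_regular A f"
    and f_holder: "holder_type A \<alpha> f"
    and P_zero: "pressure A f = 0"
    and m_prob: "prob_space m"
    and m_space: "space m = XA A"
    and m_sets: "sets m = sets (shift_borel A)"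
    and m_fixed: "\<And>g. cont_XA A g \<Longrightarrow> (\<exists>B. \<forall>x\<in>XA A. \<bar>g x\<bar> \<le> B) \<Longrightarrow>
                    integral\<^sup>L m (transfer A f g) = integral\<^sup>L m g"
    and h_pos: "\<And>x. x \<in> XA A \<Longrightarrow> h x > 0"
    and h_holder: "holder_type A \<alpha> h"
    and h_eigen: "\<And>x. x \<in> XA A \<Longrightarrow> transfer A f h x = h x"
    and h_norm: "integral\<^sup>L m h = 1"
  shows "\<exists>K1>0. \<forall>n\<ge>1. \<forall>\<omega>\<in>words A n. \<forall>\<rho>\<in>XA A. admissible A (wcat \<omega> \<rho>) \<longrightarrow>
           (1 - K1 * exp (- real n * \<alpha>)) * h (wcat \<omega> \<rho>) * measure m (cyl A \<omega>)
             \<le> (\<integral>x\<in>cyl A \<omega>. h x \<partial>m) \<and>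
           (\<integral>x\<in>cyl A \<omega>. h x \<partial>m)
             \<le> (1 + K1 * exp (- real n * \<alpha>)) * h (wcat \<omega> \<rho>) * measure m (cyl A \<omega>)"
proof -
  interpret prob_space m by (rule m_prob)
  obtain c where c: "c > 0" "\<And>x. x \<in> XA A \<Longrightarrow> c \<le> h x"
    using eigenfunction_bounded_below[OF alpha_pos irred f_holder h_pos h_holder h_eigen] by blast
  obtain K where K: "K > 0"
    and near_point: "\<And>n \<omega> \<rho> x. n \<ge> 1 \<Longrightarrow> length \<omega> = n \<Longrightarrow> admissible A (wcat \<omega> \<rho>) \<Longrightarrow>
      x \<in> cyl A \<omega> \<Longrightarrow> \<bar>h x - h (wcat \<omega> \<rho>)\<bar> \<le> K * exp (- real n * \<alpha>) * h (wcat \<omega> \<rho>)"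
    using holder_type_relative_oscillation_cyl[OF h_holder c] by metis
  have cyl_sets: "cyl A \<omega> \<in> sets m" for \<omega>
    unfolding m_sets by (rule cyl_in_shift_borel)
  have h_integrable: "integrable m h"
    using h_norm not_integrable_integral_eq by fastforce
  have h_cyl_integrable: "set_integrable m (cyl A \<omega>) h" for \<omega>
    unfolding set_integrable_def using cyl_sets h_integrable by (rule integrable_mult_indicator)
  have near: "\<bar>(\<integral>x\<in>cyl A \<omega>. h x \<partial>m) - h (wcat \<omega> \<rho>) * measure m (cyl A \<omega>)\<bar>
      \<le> K * exp (- real n * \<alpha>) * h (wcat \<omega> \<rho>) * measure m (cyl A \<omega>)"
    if "n \<ge> 1" "\<omega> \<in> words A n" "admissible A (wcat \<omega> \<rho>)" for n \<omega> \<rho>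
    using that unfolding words_def
    by (intro set_integral_near_const cyl_sets h_cyl_integrable near_point) auto
  show ?thesis
  proof (intro exI[of _ K] conjI allI impI ballI K)
    fix n \<omega> \<rho>
    assume "n \<ge> 1" "\<omega> \<in> words A n" "admissible A (wcat \<omega> \<rho>)"
    then show "(1 - K * exp (- real n * \<alpha>)) * h (wcat \<omega> \<rho>) * measure m (cyl A \<omega>)
        \<le> (\<integral>x\<in>cyl A \<omega>. h x \<partial>m)"
      and "(\<integral>x\<in>cyl A \<omega>. h x \<partial>m)
        \<le> (1 + K * exp (- real n * \<alpha>)) * h (wcat \<omega> \<rho>) * measure m (cyl A \<omega>)"
      using near[of n \<omega> \<rho>] by (simp_all add: abs_le_iff left_diff_distrib distrib_right)
  qed
qed

end
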